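(* Let $n\ge 4$ and let $\varepsilon:UV_n(2)\to\mathrm{GL}_{n+1}(\mathbb{C})$ be a nontrivial homogeneous $3$-local representation. Then, up to equivalence, $\varepsilon$ is equal to one of four representations $\varepsilon_j$ ($1\le j\le 4$) given by $\varepsilon_j(\rho_i)=\mathrm{diag}(I_{i-1},R^{(j)},I_{n-i-1})$, $\varepsilon_j(\sigma_{i,1})=\mathrm{diag}(I_{i-1},S_1^{(j)},I_{n-i-1})$, $\varepsilon_j(\sigma_{i,2})=\mathrm{diag}(I_{i-1},S_2^{(j)},I_{n-i-1})$ for all $1\le i\le n-1$, where (with $t\in\{1,2\}$): (1) $R^{(1)}=\begin{pmatrix}1&0&0\\0&0&r_6\\0&\frac1{r_6}&0\end{pmatrix}$, $S_t^{(1)}=\begin{pmatrix}1&0&0\\0&s_{5,t}&s_{6,t}\\0&s_{8,t}&s_{9,t}\end{pmatrix}$, with $r_6\ne0$ and $s_{5,t}s_{9,t}-s_{6,t}s_{8,t}\ne0$; (2) $R^{(2)}=\begin{pmatrix}0&r_2&0\\ \frac1{r_2}&0&0\\0&0&1\end{pmatrix}$, $S_t^{(2)}=\begin{pmatrix}s_{1,t}&s_{2,t}&0\\ s_{4,t}&s_{5,t}&0\\0&0&1\end{pmatrix}$, with $r_2\ne0$ and $s_{1,t}s_{5,t}-s_{2,t}s_{4,t}\ne0$; (3) $R^{(3)}=\begin{pmatrix}1&0&0\\ \frac1{r_6}&-1&r_6\\0&0&1\end{pmatrix}$, $S_t^{(3)}=\begin{pmatrix}1&0&0\\ s_{4,t}&s_{5,t}&r_6(1-r_6s_{4,t}-s_{5,t})\\0&0&1\end{pmatrix}$,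 with $r_6\ne0$ and $s_{5,t}\ne0$; (4) $R^{(4)}=\begin{pmatrix}1&r_2&0\\0&-1&0\\0&\frac1{r_2}&1\end{pmatrix}$, $S_t^{(4)}=\begin{pmatrix}1&r_2(1-s_{5,t}-r_2s_{8,t})&0\\0&s_{5,t}&0\\0&s_{8,t}&1\end{pmatrix}$, with $r_2\ne0$ and $s_{5,t}\ne0$. All parameters are complex numbers.
   Context: $UV_n(c)$ is the group with generators $\rho_i$ ($1\le i\le n-1$), $\sigma_{i,t}$ ($1\le i\le n-1$, $1\le t\le c$) and relations $\rho_i\rho_{i+1}\rho_i=\rho_{i+1}\rho_i\rho_{i+1}$, $\rho_i\rho_j=\rho_j\rho_i$ ($|i-j|\ge2$), $\rho_i^2=1$, $\sigma_{i,t}\sigma_{j,\ell}=\sigma_{j,\ell}\sigma_{i,t}$ ($|i-j|\ge2$), $\sigma_{i,t}\rho_j=\rho_j\sigma_{i,t}$ ($|i-j|\ge2$), $\rho_i\rho_{i+1}\sigma_{i,t}=\sigma_{i+1,t}\rho_i\rho_{i+1}$ ($1\le i\le n-2$). A representation $\theta:UV_n(2)\to\mathrm{GL}_{n+1}(\mathbb{C})$ is homogeneous $3$-local if there are $R,S_1,S_2\in\mathrm{GL}_3(\mathbb{C})$ with $\theta(\rho_i)=\mathrm{diag}(I_{i-1},R,I_{n-i-1})$, $\theta(\sigma_{i,t})=\mathrm{diag}(I_{i-1},S_t,I_{n-i-1})$ for all $i$ and $t=1,2$ (block diagonal, $I_r$ the $r\times r$ identity). Nontrivial means not the trivial representation;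 equivalence means conjugacy by a fixed invertible matrix. *)

theory Defs
  imports "Jordan_Normal_Form.Matrix"
begin

text \<open>Matrices are Jordan_Normal_Form matrices over complex numbers, rows/columns
indexed from 0. The block matrix diag(I_(i-1), A, I_(n-i-1)) of size n+1, for a
3x3 matrix A and 1 \<le> i \<le> n-1, has A in rows/columns i-1, i, i+1.\<close>

definition blk :: "nat \<Rightarrow> nat \<Rightarrow> complex mat \<Rightarrow> complex mat" where
  "blk n i A = mat (n+1) (n+1) (\<lambda>(a,b).
     if i - 1 \<le> a \<and> a \<le> i + 1 \<and> i - 1 \<le> b \<and> b \<le> i + 1
     then A $$ (a - (i - 1), b - (i - 1))
     else if a = b then 1 else 0)"

text \<open>The defining relations of UV_n(c), for c = 2, imposed on the images
rho i (1 \<le> i \<le> n-1) and sig i t (1 \<le> i \<le> n-1, t \<in> {1,2}), all invertible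
(n+1)x(n+1) matrices. By the universal property of a group presentation, such an
assignment is exactly a representation UV_n(2) \<rightarrow> GL_(n+1)(C).\<close>

definition UV2_rep :: "nat \<Rightarrow> (nat \<Rightarrow> complex mat) \<Rightarrow> (nat \<Rightarrow> nat \<Rightarrow> complex mat) \<Rightarrow> bool" where
  "UV2_rep n rho sig \<longleftrightarrow>
    (\<forall>i\<in>{1..n-1}. rho i \<in> carrier_mat (n+1) (n+1) \<and> invertible_mat (rho i)) \<and>
    (\<forall>i\<in>{1..n-1}. \<forall>t\<in>{1,2::nat}. sig i t \<in> carrier_mat (n+1) (n+1) \<and> invertible_mat (sig i t)) \<and>
    (\<forall>i\<in>{1..n-2}. rho i * rho (i+1) * rho i = rho (i+1) * rho i * rho (i+1)) \<and>
    (\<forall>i\<in>{1..n-1}. \<forall>j\<in>{1..n-1}. (i + 2 \<le> j \<or> j + 2 \<le> i) \<longrightarrow> rho i * rho j = rho j * rho i) \<and>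
    (\<forall>i\<in>{1..n-1}. rho i * rho i = 1\<^sub>m (n+1)) \<and>
    (\<forall>i\<in>{1..n-1}. \<forall>j\<in>{1..n-1}. \<forall>t\<in>{1,2::nat}. \<forall>l\<in>{1,2::nat}.
        (i + 2 \<le> j \<or> j + 2 \<le> i) \<longrightarrow> sig i t * sig j l = sig j l * sig i t) \<and>
    (\<forall>i\<in>{1..n-1}. \<forall>j\<in>{1..n-1}. \<forall>t\<in>{1,2::nat}.
        (i + 2 \<le> j \<or> j + 2 \<le> i) \<longrightarrow> sig i t * rho j = rho j * sig i t) \<and>
    (\<forall>i\<in>{1..n-2}. \<forall>t\<in>{1,2::nat}.
        rho i * rho (i+1) * sig i t = sig (i+1) t * rho i * rho (i+1))"

definition fam1 :: "complex mat \<Rightarrow> complex mat \<Rightarrow> complex mat \<Rightarrow> bool" where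
  "fam1 R S1 S2 \<longleftrightarrow> (\<exists>r6. r6 \<noteq> 0 \<and>
     R = mat_of_rows_list 3 [[1,0,0],[0,0,r6],[0,1/r6,0]] \<and>
     (\<forall>S\<in>{S1,S2}. \<exists>s5 s6 s8 s9. s5*s9 - s6*s8 \<noteq> 0 \<and>
        S = mat_of_rows_list 3 [[1,0,0],[0,s5,s6],[0,s8,s9]]))"

definition fam2 :: "complex mat \<Rightarrow> complex mat \<Rightarrow> complex mat \<Rightarrow> bool" where
  "fam2 R S1 S2 \<longleftrightarrow> (\<exists>r2. r2 \<noteq> 0 \<and>
     R = mat_of_rows_list 3 [[0,r2,0],[1/r2,0,0],[0,0,1]] \<and>
     (\<forall>S\<in>{S1,S2}. \<exists>s1 s2 s4 s5. s1*s5 - s2*s4 \<noteq> 0 \<and>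
        S = mat_of_rows_list 3 [[s1,s2,0],[s4,s5,0],[0,0,1]]))"

definition fam3 :: "complex mat \<Rightarrow> complex mat \<Rightarrow> complex mat \<Rightarrow> bool" where
  "fam3 R S1 S2 \<longleftrightarrow> (\<exists>r6. r6 \<noteq> 0 \<and>
     R = mat_of_rows_list 3 [[1,0,0],[1/r6,-1,r6],[0,0,1]] \<and>
     (\<forall>S\<in>{S1,S2}. \<exists>s4 s5. s5 \<noteq> 0 \<and>
        S = mat_of_rows_list 3 [[1,0,0],[s4,s5,r6*(1 - r6*s4 - s5)],[0,0,1]]))"

definition fam4 :: "complex mat \<Rightarrow> complex mat \<Rightarrow> complex mat \<Rightarrow> bool" where
  "fam4 R S1 S2 \<longleftrightarrow> (\<exists>r2. r2 \<noteq> 0 \<and>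
     R = mat_of_rows_list 3 [[1,r2,0],[0,-1,0],[0,1/r2,1]] \<and>
     (\<forall>S\<in>{S1,S2}. \<exists>s5 s8. s5 \<noteq> 0 \<and>
        S = mat_of_rows_list 3 [[1,r2*(1 - s5 - r2*s8),0],[0,s5,0],[0,s8,1]]))"

end

theory Submission
  imports Defs "Jordan_Normal_Form.Determinant"
begin

(* The generators rho_1, rho_2, rho_3 and sigma_{i,t} (i \<le> 3) act only on the first five
   coordinates, so the relations among them can be read off in the leading 5x5 block, where they
   become polynomial equations in the entries r_1 .. r_9 of R (row by row) and in those of S_t.
   The relation rho_1 rho_3 = rho_3 rho_1 kills the corner entries r_3, r_7 and, together with
   rho_1^2 = 1 and the braid relation, leaves for R only the identity and the four matrices
   R^(j). For each R^(j), the relations sigma_{1,t} rho_3 = rho_3 sigma_{1,t},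
   sigma_{3,t} rho_1 = rho_1 sigma_{3,t} and rho_1 rho_2 sigma_{1,t} = sigma_{2,t} rho_1 rho_2
   force S_t into the shape S_t^(j); the parameter conditions are det S_t \<noteq> 0. If R = 1 the
   same relations force S_t = 1, which nontriviality excludes. So no change of basis is needed:
   the representation itself is one of the four. *)

lemma carrier_mat_3_rows:
  "A \<in> carrier_mat 3 3 \<Longrightarrow> A = mat_of_rows_list 3
    [[A$$(0,0), A$$(0,1), A$$(0,2)], [A$$(1,0), A$$(1,1), A$$(1,2)], [A$$(2,0), A$$(2,1), A$$(2,2)]]"
  by (intro eq_matI)
     (auto simp: mat_of_rows_list_def numeral_eq_Suc less_Suc_eq nth_Cons')

lemma one_mat_3_rows: "1\<^sub>m 3 = mat_of_rows_list 3 [[1,0,0],[0,1,0],[0,0,1]]"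
  using carrier_mat_3_rows[of "1\<^sub>m 3"] by simp

lemma det_2:
  assumes "(A :: 'a :: comm_ring_1 mat) \<in> carrier_mat 2 2"
  shows "det A = A$$(0,0) * A$$(1,1) - A$$(0,1) * A$$(1,0)"
  using assms
  by (simp add: laplace_expansion_row[OF assms, of 0] cofactor_def mat_delete_def det_single
      numeral_eq_Suc)

lemma det_3:
  assumes "(A :: 'a :: comm_ring_1 mat) \<in> carrier_mat 3 3"
  shows "det A = A$$(0,0) * (A$$(1,1) * A$$(2,2) - A$$(1,2) * A$$(2,1))
    - A$$(0,1) * (A$$(1,0) * A$$(2,2) - A$$(1,2) * A$$(2,0))
    + A$$(0,2) * (A$$(1,0) * A$$(2,1) - A$$(1,1) * A$$(2,0))"
proof -
  have "mat_delete A 0 j \<in> carrier_mat 2 2" for j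
    using mat_delete_carrier[OF assms] by simp
  then show ?thesis
    using assms
    by (simp add: laplace_expansion_row[OF assms, of 0] cofactor_def det_2 numeral_eq_Suc)
       (simp add: mat_delete_def algebra_simps)
qed

lemma invertible_mat_det_nonzero:
  fixes A :: "'a :: comm_ring_1 mat"
  assumes "A \<in> carrier_mat n n" "invertible_mat A"
  shows "det A \<noteq> 0"
proof -
  obtain B where "A * B = 1\<^sub>m n" "B \<in> carrier_mat n n"
    using assms unfolding invertible_mat_def inverts_mat_def
    by (metis carrier_matD carrier_matI index_mult_mat(2,3) index_one_mat(2,3))
  then have "det A * det B = 1" using assms(1) by (metis det_mult det_one)
  then show ?thesis by auto
qed

lemma invertible_mat_one: "invertible_mat (1\<^sub>m n :: 'a :: semiring_1 mat)"
  unfolding invertible_mat_def inverts_mat_def by (auto intro!: exI[of _ "1\<^sub>m n"])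

definition id_outside :: "nat \<Rightarrow> nat \<Rightarrow> 'a :: {zero,one} mat \<Rightarrow> bool" where
  "id_outside N k M \<longleftrightarrow> M \<in> carrier_mat N N \<and>
     (\<forall>a<N. \<forall>b<N. (k \<le> a \<or> k \<le> b) \<longrightarrow> M $$ (a,b) = (if a = b then 1 else 0))"

definition leading_submatrix :: "nat \<Rightarrow> 'a mat \<Rightarrow> 'a mat" where
  "leading_submatrix k M = mat k k (\<lambda>(a,b). M $$ (a,b))"

lemma id_outside_mult_index:
  fixes A B :: "'a :: semiring_1 mat"
  assumes A: "id_outside N k A" and B: "id_outside N k B" and "k \<le> N" "a < N" "b < N"
  shows "(A * B) $$ (a,b) = (if k \<le> a \<or> k \<le> b then (if a = b then 1 else 0)
                              else (\<Sum>c = 0..<k. A $$ (a,c) * B $$ (c,b)))"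
proof -
  have "A \<in> carrier_mat N N" "B \<in> carrier_mat N N"
    using A B by (simp_all add: id_outside_def)
  then have AB: "(A * B) $$ (a,b) = (\<Sum>c = 0..<N. A $$ (a,c) * B $$ (c,b))"
    using assms(4,5) by (simp add: scalar_prod_def)
  consider "k \<le> a" | "k \<le> b" | "a < k" "b < k" by linarith
  then show ?thesis
  proof cases
    case 1
    have "(\<Sum>c = 0..<N. A $$ (a,c) * B $$ (c,b)) = (\<Sum>c = 0..<N. if c = a then B $$ (c,b) else 0)"
      using A 1 assms(4) by (intro sum.cong) (auto simp: id_outside_def)
    then show ?thesis using AB B 1 assms(4,5) by (simp add: id_outside_def)
  next
    case 2
    have "(\<Sum>c = 0..<N. A $$ (a,c) * B $$ (c,b)) = (\<Sum>c = 0..<N. if c = b then A $$ (a,c) else 0)"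
      using B 2 assms(5) by (intro sum.cong) (auto simp: id_outside_def)
    then show ?thesis using AB A 2 assms(4,5) by (simp add: id_outside_def)
  next
    case 3
    have "(\<Sum>c = k..<N. A $$ (a,c) * B $$ (c,b)) = 0"
      using A 3 by (intro sum.neutral) (auto simp: id_outside_def)
    then show ?thesis
      using AB 3 sum.atLeastLessThan_concat[OF _ \<open>k \<le> N\<close>, of 0 "\<lambda>c. A $$ (a,c) * B $$ (c,b)"]
      by simp
  qed
qed

lemma id_outside_mult:
  fixes A B :: "'a :: semiring_1 mat"
  assumes "id_outside N k A" "id_outside N k B" "k \<le> N"
  shows "id_outside N k (A * B)"
  using assms id_outside_mult_index[OF assms] mult_carrier_mat[of A N N B N]
  by (simp add: id_outside_def)

lemma leading_submatrix_mult:
  fixes A B :: "'a :: semiring_1 mat"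
  assumes "id_outside N k A" "id_outside N k B" "k \<le> N"
  shows "leading_submatrix k (A * B) = leading_submatrix k A * leading_submatrix k B"
  using id_outside_mult_index[OF assms] assms(3)
  by (intro eq_matI) (auto simp: leading_submatrix_def scalar_prod_def)

lemma blk_carrier [simp]: "blk n i A \<in> carrier_mat (n+1) (n+1)"
  by (simp add: blk_def)

(* Suc n rather than n + 1, which simp rewrites to Suc n: only so can the next two rules fire
   inside simp. *)
lemma id_outside_blk: "i + 2 \<le> k \<Longrightarrow> id_outside (Suc n) k (blk n i A)"
  by (auto simp: id_outside_def blk_def)

lemma leading_submatrix_blk:
  "0 < k \<Longrightarrow> k \<le> Suc n \<Longrightarrow> leading_submatrix k (blk n i A) = blk (k - 1) i A"
  by (intro eq_matI) (auto simp: leading_submatrix_def blk_def)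

lemma leading_submatrix_one: "k \<le> N \<Longrightarrow> leading_submatrix k (1\<^sub>m N) = 1\<^sub>m k"
  by (intro eq_matI) (auto simp: leading_submatrix_def)

lemma blk_one: "blk n i (1\<^sub>m 3) = 1\<^sub>m (n+1)"
  by (intro eq_matI) (auto simp: blk_def)

definition rho_relations :: "complex mat \<Rightarrow> bool" where
  "rho_relations R \<longleftrightarrow>
     blk 4 1 R * blk 4 3 R = blk 4 3 R * blk 4 1 R \<and>
     blk 4 1 R * blk 4 1 R = 1\<^sub>m 5 \<and>
     blk 4 1 R * blk 4 2 R * blk 4 1 R = blk 4 2 R * blk 4 1 R * blk 4 2 R"

definition sigma_relations :: "complex mat \<Rightarrow> complex mat \<Rightarrow> bool" where
  "sigma_relations R S \<longleftrightarrow>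
     blk 4 1 S * blk 4 3 R = blk 4 3 R * blk 4 1 S \<and>
     blk 4 3 S * blk 4 1 R = blk 4 1 R * blk 4 3 S \<and>
     blk 4 1 R * blk 4 2 R * blk 4 1 S = blk 4 2 S * blk 4 1 R * blk 4 2 R"

lemma UV2_rep_local_relations:
  fixes S :: "nat \<Rightarrow> complex mat"
  assumes "4 \<le> n" and "UV2_rep n (\<lambda>i. blk n i R) (\<lambda>i t. blk n i (S t))" and "t \<in> {1,2}"
  shows "rho_relations R" and "sigma_relations R (S t)"
proof -
  have idx: "(1::nat) \<in> {1..n-1}" "(2::nat) \<in> {1..n-1}" "(3::nat) \<in> {1..n-1}"
    "(1::nat) \<in> {1..n-2}"
    using assms(1) by auto
  from assms(2) have
    braid: "\<forall>i\<in>{1..n-2}.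
      blk n i R * blk n (i+1) R * blk n i R = blk n (i+1) R * blk n i R * blk n (i+1) R" and
    far: "\<forall>i\<in>{1..n-1}. \<forall>j\<in>{1..n-1}. (i + 2 \<le> j \<or> j + 2 \<le> i) \<longrightarrow>
      blk n i R * blk n j R = blk n j R * blk n i R" and
    square: "\<forall>i\<in>{1..n-1}. blk n i R * blk n i R = 1\<^sub>m (n+1)" and
    far_mixed: "\<forall>i\<in>{1..n-1}. \<forall>j\<in>{1..n-1}. \<forall>u\<in>{1,2::nat}. (i + 2 \<le> j \<or> j + 2 \<le> i) \<longrightarrow>
      blk n i (S u) * blk n j R = blk n j R * blk n i (S u)" and
    braid_mixed: "\<forall>i\<in>{1..n-2}. \<forall>u\<in>{1,2::nat}.
      blk n i R * blk n (i+1) R * blk n i (S u) = blk n (i+1) (S u) * blk n i R * blk n (i+1) R"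
    unfolding UV2_rep_def by auto
  have "blk n 1 R * blk n 3 R = blk n 3 R * blk n 1 R"
    and "blk n 1 R * blk n 1 R = 1\<^sub>m (n+1)"
    and "blk n 1 R * blk n 2 R * blk n 1 R = blk n 2 R * blk n 1 R * blk n 2 R"
    and "blk n 1 (S t) * blk n 3 R = blk n 3 R * blk n 1 (S t)"
    and "blk n 3 (S t) * blk n 1 R = blk n 1 R * blk n 3 (S t)"
    and "blk n 1 R * blk n 2 R * blk n 1 (S t) = blk n 2 (S t) * blk n 1 R * blk n 2 R"
    using far[rule_format, of 1 3] square[rule_format, of 1] braid[rule_format, of 1]
      far_mixed[rule_format, of 1 3 t] far_mixed[rule_format, of 3 1 t] braid_mixed[rule_format, of 1 t]
      idx assms(3) by (simp_all add: numeral_2_eq_2)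
  from this[THEN arg_cong[where f = "leading_submatrix 5"]] show
    "rho_relations R" and "sigma_relations R (S t)"
    using assms(1)
    by (simp_all add: rho_relations_def sigma_relations_def leading_submatrix_mult[where N="Suc n"]
        id_outside_mult[where N="Suc n"] id_outside_blk leading_submatrix_blk leading_submatrix_one)
qed

lemma sum_atLeast0_lessThan_5: "(\<Sum>i = 0..<5. f i) = f 0 + f 1 + f 2 + f 3 + f (4::nat)"
  by (simp add: numeral_eq_Suc)

lemmas blk4_index_simps = blk_def scalar_prod_def mat_of_rows_list_def sum_atLeast0_lessThan_5

context
  fixes r1 r2 r3 r4 r5 r6 r7 r8 r9 :: complex
  assumes rho: "rho_relations (mat_of_rows_list 3 [[r1,r2,r3],[r4,r5,r6],[r7,r8,r9]])"
begin

private abbreviation "R \<equiv> mat_of_rows_list 3 [[r1,r2,r3],[r4,r5,r6],[r7,r8,r9]]"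

private lemma far_commute: "(blk 4 1 R * blk 4 3 R) $$ ij = (blk 4 3 R * blk 4 1 R) $$ ij"
  using rho by (simp add: rho_relations_def)

private lemma involution: "(blk 4 1 R * blk 4 1 R) $$ ij = 1\<^sub>m 5 $$ ij"
  using rho by (simp add: rho_relations_def)

private lemma braid:
  "(blk 4 1 R * blk 4 2 R * blk 4 1 R) $$ ij = (blk 4 2 R * blk 4 1 R * blk 4 2 R) $$ ij"
  using rho by (simp add: rho_relations_def)

private lemma r3_zero: "r3 = 0"
  using far_commute[of "(0,4)"] by (simp add: blk4_index_simps)

private lemma r7_zero: "r7 = 0"
  using far_commute[of "(4,0)"] by (simp add: blk4_index_simps)

private lemma r2_r6_zero: "r2 = 0 \<or> r6 = 0"
  using far_commute[of "(1,3)"] by (auto simp: blk4_index_simps)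

private lemma r4_r8_zero: "r4 = 0 \<or> r8 = 0"
  using far_commute[of "(3,1)"] by (auto simp: blk4_index_simps)

private lemma r6_zero_or_r1: "r6 = 0 \<or> r1 = 1"
  using far_commute[of "(1,2)"] by (auto simp: blk4_index_simps algebra_simps)

private lemma r8_zero_or_r1: "r8 = 0 \<or> r1 = 1"
  using far_commute[of "(2,1)"] by (auto simp: blk4_index_simps algebra_simps)

private lemma r2_zero_or_r9: "r2 = 0 \<or> r9 = 1"
  using far_commute[of "(2,3)"] by (auto simp: blk4_index_simps algebra_simps)

private lemma r4_zero_or_r9: "r4 = 0 \<or> r9 = 1"
  using far_commute[of "(3,2)"] by (auto simp: blk4_index_simps algebra_simps)

private lemma involution_00: "r1 * r1 + r2 * r4 = 1"
  using involution[of "(0,0)"] r3_zero by (simp add: blk4_index_simps)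

private lemma involution_01: "r2 = 0 \<or> r5 = - r1"
proof -
  have "r2 * (r1 + r5) = 0"
    using involution[of "(0,1)"] r3_zero by (simp add: blk4_index_simps algebra_simps)
  then show ?thesis by (simp add: add_eq_0_iff)
qed

private lemma involution_10: "r4 = 0 \<or> r5 = - r1"
proof -
  have "r4 * (r1 + r5) = 0"
    using involution[of "(1,0)"] r7_zero by (simp add: blk4_index_simps algebra_simps)
  then show ?thesis by (simp add: add_eq_0_iff)
qed

private lemma involution_12: "r6 = 0 \<or> r9 = - r5"
proof -
  have "r6 * (r5 + r9) = 0"
    using involution[of "(1,2)"] r3_zero by (simp add: blk4_index_simps algebra_simps)
  then show ?thesis by (simp add: add_eq_0_iff)
qed

private lemma involution_21: "r8 = 0 \<or> r9 = - r5"
proof -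
  have "r8 * (r5 + r9) = 0"
    using involution[of "(2,1)"] r7_zero by (simp add: blk4_index_simps algebra_simps)
  then show ?thesis by (simp add: add_eq_0_iff)
qed

private lemma involution_11: "r2 * r4 + r5 * r5 + r6 * r8 = 1"
  using involution[of "(1,1)"] by (simp add: blk4_index_simps algebra_simps)

private lemma involution_22: "r6 * r8 + r9 * r9 = 1"
  using involution[of "(2,2)"] r3_zero by (simp add: blk4_index_simps algebra_simps)

lemma rho_fam2_case:
  assumes "r2 \<noteq> 0" "r4 \<noteq> 0"
  shows "R = mat_of_rows_list 3 [[0,r2,0],[1/r2,0,0],[0,0,1]]"
proof -
  have r6: "r6 = 0" using r2_r6_zero assms by simp
  have r8: "r8 = 0" using r4_r8_zero assms by simp
  have r9: "r9 = 1" using r2_zero_or_r9 assms by simp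
  have r5: "r5 = - r1" using involution_01 assms by simp
  have "r1 * r1 * r2 = 0"
    using braid[of "(1,2)"] r3_zero r7_zero r5 r6 r8 r9 by (simp add: blk4_index_simps algebra_simps)
  then have r1: "r1 = 0" using assms by simp
  have "r4 = 1 / r2" using involution_00 r1 assms by (simp add: field_simps)
  then show ?thesis using r1 r3_zero r5 r6 r7_zero r8 r9 by simp
qed

lemma rho_fam4_case:
  assumes "r2 \<noteq> 0" "r4 = 0"
  shows "R = mat_of_rows_list 3 [[1,r2,0],[0,-1,0],[0,1/r2,1]]"
proof -
  have r6: "r6 = 0" using r2_r6_zero assms by simp
  have r9: "r9 = 1" using r2_zero_or_r9 assms by simp
  have r5: "r5 = - r1" using involution_01 assms by simp
  have "r1 * r1 = 1" using involution_00 assms by simp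
  then have "r2 * (r2 * r8 - 1) = 0"
    using braid[of "(0,1)"] r3_zero r5 by (simp add: blk4_index_simps algebra_simps)
  then have r8: "r8 = 1 / r2" using assms by (simp add: field_simps)
  then have r1: "r1 = 1" using r8_zero_or_r1 assms by simp
  show ?thesis using r1 r3_zero r5 r6 r7_zero r8 r9 assms by simp
qed

lemma rho_fam3_case:
  assumes "r2 = 0" "r4 \<noteq> 0"
  shows "r6 \<noteq> 0 \<and> R = mat_of_rows_list 3 [[1,0,0],[1/r6,-1,r6],[0,0,1]]"
proof -
  have r8: "r8 = 0" using r4_r8_zero assms by simp
  have r9: "r9 = 1" using r4_zero_or_r9 assms by simp
  have r5: "r5 = - r1" using involution_10 assms by simp
  have "r1 * r1 = 1" using involution_00 assms by simp
  then have "r4 * (r4 * r6 - 1) = 0"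
    using braid[of "(1,0)"] r7_zero r5 by (simp add: blk4_index_simps algebra_simps)
  then have "r4 * r6 = 1" using assms by simp
  then have r6: "r6 \<noteq> 0" and r4: "r4 = 1 / r6" by (auto simp: eq_divide_eq)
  have r1: "r1 = 1" using r6_zero_or_r1 r6 by simp
  show ?thesis using r1 r3_zero r4 r5 r6 r7_zero r8 r9 assms by simp
qed

lemma rho_fam1_case:
  assumes "r2 = 0" "r4 = 0" "r6 \<noteq> 0"
  shows "R = mat_of_rows_list 3 [[1,0,0],[0,0,r6],[0,1/r6,0]]"
proof -
  have r1: "r1 = 1" using r6_zero_or_r1 assms by simp
  have r9: "r9 = - r5" using involution_12 assms by simp
  have "r5 * r5 * r6 = 0"
    using braid[of "(1,2)"] assms r3_zero r9 by (simp add: blk4_index_simps algebra_simps)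
  then have r5: "r5 = 0" using assms by simp
  have "r8 = 1 / r6" using involution_22 r5 r9 assms by (simp add: field_simps)
  then show ?thesis using r1 r3_zero r5 r7_zero r9 assms by simp
qed

lemma rho_r8_case_impossible:
  assumes "r2 = 0" "r4 = 0" "r6 = 0" "r8 \<noteq> 0"
  shows False
proof -
  have r9: "r9 = - r5" using involution_21 assms by simp
  have "r5 * r5 * r8 = 0"
    using braid[of "(3,2)"] assms r7_zero r9 by (simp add: blk4_index_simps algebra_simps)
  then have "r5 = 0" using assms by simp
  then show False using involution_22 r9 assms by simp
qed

lemma rho_identity_case:
  assumes "r2 = 0" "r4 = 0" "r6 = 0" "r8 = 0"
  shows "R = 1\<^sub>m 3"
proof -
  have "r1 * r1 = 1" using involution_00 assms by simp
  moreover have "r1 * (r1 - 1) = 0"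
    using braid[of "(0,0)"] assms r3_zero r7_zero by (simp add: blk4_index_simps algebra_simps)
  ultimately have r1: "r1 = 1" by auto
  have "r9 * r9 = 1" using involution_22 assms by simp
  moreover have "r9 * (r9 - 1) = 0"
    using braid[of "(3,3)"] assms r3_zero r7_zero by (simp add: blk4_index_simps algebra_simps)
  ultimately have r9: "r9 = 1" by auto
  have "r5 * r5 = 1" using involution_11 assms by simp
  moreover have "r5 * (r5 - 1) = 0"
    using braid[of "(1,1)"] assms r1 r3_zero r7_zero r9 by (simp add: blk4_index_simps algebra_simps)
  ultimately have r5: "r5 = 1" by auto
  show ?thesis using assms r1 r3_zero r5 r7_zero r9 by (simp add: one_mat_3_rows)
qed

lemma rho_relations_entries_cases:
  "R = 1\<^sub>m 3 \<or>
   (\<exists>r6. r6 \<noteq> 0 \<and> R = mat_of_rows_list 3 [[1,0,0],[0,0,r6],[0,1/r6,0]]) \<or>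
   (\<exists>r2. r2 \<noteq> 0 \<and> R = mat_of_rows_list 3 [[0,r2,0],[1/r2,0,0],[0,0,1]]) \<or>
   (\<exists>r6. r6 \<noteq> 0 \<and> R = mat_of_rows_list 3 [[1,0,0],[1/r6,-1,r6],[0,0,1]]) \<or>
   (\<exists>r2. r2 \<noteq> 0 \<and> R = mat_of_rows_list 3 [[1,r2,0],[0,-1,0],[0,1/r2,1]])"
proof -
  consider "r2 \<noteq> 0" "r4 \<noteq> 0" | "r2 \<noteq> 0" "r4 = 0" | "r2 = 0" "r4 \<noteq> 0"
    | "r2 = 0" "r4 = 0" "r6 \<noteq> 0" | "r2 = 0" "r4 = 0" "r6 = 0" "r8 \<noteq> 0"
    | "r2 = 0" "r4 = 0" "r6 = 0" "r8 = 0"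
    by blast
  then show ?thesis
  proof cases
    case 1
    then show ?thesis using rho_fam2_case by blast
  next
    case 2
    then show ?thesis using rho_fam4_case by blast
  next
    case 3
    then show ?thesis using rho_fam3_case by blast
  next
    case 4
    then show ?thesis using rho_fam1_case by blast
  next
    case 5
    then show ?thesis using rho_r8_case_impossible by blast
  next
    case 6
    then show ?thesis using rho_identity_case by blast
  qed
qed

end

lemma rho_relations_cases:
  assumes "R \<in> carrier_mat 3 3" "rho_relations R"
  shows "R = 1\<^sub>m 3 \<or>
   (\<exists>r6. r6 \<noteq> 0 \<and> R = mat_of_rows_list 3 [[1,0,0],[0,0,r6],[0,1/r6,0]]) \<or>
   (\<exists>r2. r2 \<noteq> 0 \<and> R = mat_of_rows_list 3 [[0,r2,0],[1/r2,0,0],[0,0,1]]) \<or>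
   (\<exists>r6. r6 \<noteq> 0 \<and> R = mat_of_rows_list 3 [[1,0,0],[1/r6,-1,r6],[0,0,1]]) \<or>
   (\<exists>r2. r2 \<noteq> 0 \<and> R = mat_of_rows_list 3 [[1,r2,0],[0,-1,0],[0,1/r2,1]])"
proof -
  obtain r1 r2 r3 r4 r5 r6 r7 r8 r9
    where R: "R = mat_of_rows_list 3 [[r1,r2,r3],[r4,r5,r6],[r7,r8,r9]]"
    using carrier_mat_3_rows[OF assms(1)] by blast
  show ?thesis using assms(2) unfolding R by (rule rho_relations_entries_cases)
qed

context
  fixes R S :: "complex mat"
  assumes sigma: "sigma_relations R S" and S: "S \<in> carrier_mat 3 3"
begin

private lemma far_13: "(blk 4 1 S * blk 4 3 R) $$ ij = (blk 4 3 R * blk 4 1 S) $$ ij"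
  using sigma by (simp add: sigma_relations_def)

private lemma far_31: "(blk 4 3 S * blk 4 1 R) $$ ij = (blk 4 1 R * blk 4 3 S) $$ ij"
  using sigma by (simp add: sigma_relations_def)

private lemma braid_mixed:
  "(blk 4 1 R * blk 4 2 R * blk 4 1 S) $$ ij = (blk 4 2 S * blk 4 1 R * blk 4 2 R) $$ ij"
  using sigma by (simp add: sigma_relations_def)

lemma sigma_fam1_shape:
  assumes "r6 \<noteq> 0" "R = mat_of_rows_list 3 [[1,0,0],[0,0,r6],[0,1/r6,0]]" "invertible_mat S"
  shows "\<exists>s5 s6 s8 s9. s5*s9 - s6*s8 \<noteq> 0 \<and> S = mat_of_rows_list 3 [[1,0,0],[0,s5,s6],[0,s8,s9]]"
proof -
  have "S$$(0,0) = 1" using braid_mixed[of "(0,0)"] assms(2) by (simp add: blk4_index_simps)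
  moreover have "S$$(0,1) = 0" using far_31[of "(2,3)"] assms(2) by (simp add: blk4_index_simps)
  moreover have "S$$(0,2) = 0" using far_31[of "(2,4)"] assms(2) by (simp add: blk4_index_simps)
  moreover have "S$$(1,0) = 0" using far_31[of "(3,2)"] assms(2) by (simp add: blk4_index_simps)
  moreover have "S$$(2,0) = 0" using far_31[of "(4,2)"] assms(2) by (simp add: blk4_index_simps)
  moreover have "det S \<noteq> 0" using invertible_mat_det_nonzero[OF S assms(3)] .
  ultimately show ?thesis using carrier_mat_3_rows[OF S] det_3[OF S] by auto
qed

lemma sigma_fam2_shape:
  assumes "r2 \<noteq> 0" "R = mat_of_rows_list 3 [[0,r2,0],[1/r2,0,0],[0,0,1]]" "invertible_mat S"
  shows "\<exists>s1 s2 s4 s5. s1*s5 - s2*s4 \<noteq> 0 \<and> S = mat_of_rows_list 3 [[s1,s2,0],[s4,s5,0],[0,0,1]]"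
proof -
  have "S$$(0,2) = 0" using far_13[of "(0,2)"] assms(2) by (simp add: blk4_index_simps)
  moreover have "S$$(1,2) = 0" using far_13[of "(1,2)"] assms(2) by (simp add: blk4_index_simps)
  moreover have "S$$(2,0) = 0" using far_13[of "(2,0)"] assms(2) by (simp add: blk4_index_simps)
  moreover have "S$$(2,1) = 0" using far_13[of "(2,1)"] assms(2) by (simp add: blk4_index_simps)
  moreover have "S$$(2,2) = 1" using braid_mixed[of "(3,3)"] assms(2) by (simp add: blk4_index_simps)
  moreover have "det S \<noteq> 0" using invertible_mat_det_nonzero[OF S assms(3)] .
  ultimately show ?thesis using carrier_mat_3_rows[OF S] det_3[OF S] by auto
qed

lemma sigma_fam3_shape:
  assumes "r6 \<noteq> 0" "R = mat_of_rows_list 3 [[1,0,0],[1/r6,-1,r6],[0,0,1]]" "invertible_mat S"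
  shows "\<exists>s4 s5. s5 \<noteq> 0 \<and> S = mat_of_rows_list 3 [[1,0,0],[s4,s5,r6*(1 - r6*s4 - s5)],[0,0,1]]"
proof -
  have "S$$(0,0) = 1" using braid_mixed[of "(0,0)"] assms(2) by (simp add: blk4_index_simps)
  moreover have "S$$(0,1) = 0" using braid_mixed[of "(0,1)"] assms(2) by (simp add: blk4_index_simps)
  moreover have "S$$(0,2) = 0" using braid_mixed[of "(0,2)"] assms(2) by (simp add: blk4_index_simps)
  moreover have S20: "S$$(2,0) = 0" using braid_mixed[of "(2,0)"] assms(2) by (simp add: blk4_index_simps)
  moreover have S21: "S$$(2,1) = 0"
    using braid_mixed[of "(3,2)"] assms S20 by (simp add: blk4_index_simps)
  moreover have "S$$(2,2) = 1"
    using braid_mixed[of "(3,3)"] assms(2) S20 S21 by (simp add: blk4_index_simps)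
  moreover have "S$$(1,2) = r6 * (1 - r6 * S$$(1,0) - S$$(1,1))"
    using braid_mixed[of "(2,3)"] assms(2) by (simp add: blk4_index_simps algebra_simps)
  moreover have "det S \<noteq> 0" using invertible_mat_det_nonzero[OF S assms(3)] .
  ultimately show ?thesis using carrier_mat_3_rows[OF S] det_3[OF S] by auto
qed

lemma sigma_fam4_shape:
  assumes "r2 \<noteq> 0" "R = mat_of_rows_list 3 [[1,r2,0],[0,-1,0],[0,1/r2,1]]" "invertible_mat S"
  shows "\<exists>s5 s8. s5 \<noteq> 0 \<and> S = mat_of_rows_list 3 [[1,r2*(1 - s5 - r2*s8),0],[0,s5,0],[0,s8,1]]"
proof -
  have "S$$(0,2) = 0" using far_13[of "(0,3)"] assms by (simp add: blk4_index_simps)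
  moreover have "S$$(1,2) = 0" using far_13[of "(1,3)"] assms by (simp add: blk4_index_simps)
  moreover have "S$$(2,2) = 1" using far_13[of "(2,3)"] assms by (simp add: blk4_index_simps)
  moreover have "S$$(0,0) = 1" using far_31[of "(2,1)"] assms by (simp add: blk4_index_simps)
  moreover have "S$$(1,0) = 0" using far_31[of "(3,1)"] assms by (simp add: blk4_index_simps)
  moreover have "S$$(2,0) = 0" using braid_mixed[of "(3,1)"] assms(2) by (simp add: blk4_index_simps)
  moreover have "S$$(0,1) = r2 * (1 - S$$(1,1) - r2 * S$$(2,1))"
    using braid_mixed[of "(0,1)"] assms(2) by (simp add: blk4_index_simps algebra_simps)
  moreover have "det S \<noteq> 0" using invertible_mat_det_nonzero[OF S assms(3)] .
  ultimately show ?thesis using carrier_mat_3_rows[OF S] det_3[OF S] by auto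
qed

lemma sigma_identity_shape:
  assumes "R = 1\<^sub>m 3"
  shows "S = 1\<^sub>m 3"
proof -
  have "S$$(0,0) = 1" using braid_mixed[of "(0,0)"] assms by (simp add: blk4_index_simps)
  moreover have "S$$(0,1) = 0" using braid_mixed[of "(0,1)"] assms by (simp add: blk4_index_simps)
  moreover have "S$$(0,2) = 0" using braid_mixed[of "(0,2)"] assms by (simp add: blk4_index_simps)
  moreover have "S$$(1,0) = 0" using braid_mixed[of "(1,0)"] assms by (simp add: blk4_index_simps)
  moreover have "S$$(2,0) = 0" using braid_mixed[of "(2,0)"] assms by (simp add: blk4_index_simps)
  moreover have "S$$(2,2) = 1" using braid_mixed[of "(3,3)"] assms by (simp add: blk4_index_simps)
  moreover have "S$$(1,1) = S$$(0,0)" using braid_mixed[of "(1,1)"] assms by (simp add: blk4_index_simps)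
  moreover have "S$$(1,2) = S$$(0,1)" using braid_mixed[of "(1,2)"] assms by (simp add: blk4_index_simps)
  moreover have "S$$(2,1) = S$$(1,0)" using braid_mixed[of "(2,1)"] assms by (simp add: blk4_index_simps)
  ultimately show ?thesis using carrier_mat_3_rows[OF S] by (simp add: one_mat_3_rows)
qed

end

lemma fam1I:
  assumes "\<exists>r6. r6 \<noteq> 0 \<and> R = mat_of_rows_list 3 [[1,0,0],[0,0,r6],[0,1/r6,0]]"
    and "\<forall>S\<in>{S1,S2}. sigma_relations R S \<and> S \<in> carrier_mat 3 3 \<and> invertible_mat S"
  shows "fam1 R S1 S2"
proof -
  obtain r6 where "r6 \<noteq> 0" "R = mat_of_rows_list 3 [[1,0,0],[0,0,r6],[0,1/r6,0]]"
    using assms(1) by blast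
  then show ?thesis unfolding fam1_def using assms(2) sigma_fam1_shape by blast
qed

lemma fam2I:
  assumes "\<exists>r2. r2 \<noteq> 0 \<and> R = mat_of_rows_list 3 [[0,r2,0],[1/r2,0,0],[0,0,1]]"
    and "\<forall>S\<in>{S1,S2}. sigma_relations R S \<and> S \<in> carrier_mat 3 3 \<and> invertible_mat S"
  shows "fam2 R S1 S2"
  unfolding fam2_def using assms sigma_fam2_shape by blast

lemma fam3I:
  assumes "\<exists>r6. r6 \<noteq> 0 \<and> R = mat_of_rows_list 3 [[1,0,0],[1/r6,-1,r6],[0,0,1]]"
    and "\<forall>S\<in>{S1,S2}. sigma_relations R S \<and> S \<in> carrier_mat 3 3 \<and> invertible_mat S"
  shows "fam3 R S1 S2"
  unfolding fam3_def using assms sigma_fam3_shape by blast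

lemma fam4I:
  assumes "\<exists>r2. r2 \<noteq> 0 \<and> R = mat_of_rows_list 3 [[1,r2,0],[0,-1,0],[0,1/r2,1]]"
    and "\<forall>S\<in>{S1,S2}. sigma_relations R S \<and> S \<in> carrier_mat 3 3 \<and> invertible_mat S"
  shows "fam4 R S1 S2"
  unfolding fam4_def using assms sigma_fam4_shape by blast

theorem theorem4p1:
  fixes n :: nat and R S1 S2 :: "complex mat"
  assumes "n \<ge> 4"
    and "R \<in> carrier_mat 3 3" "S1 \<in> carrier_mat 3 3" "S2 \<in> carrier_mat 3 3"
    and "invertible_mat R" "invertible_mat S1" "invertible_mat S2"
    and "UV2_rep n (\<lambda>i. blk n i R) (\<lambda>i t. if t = 1 then blk n i S1 else blk n i S2)"
    and "\<not> (\<forall>i\<in>{1..n-1}. blk n i R = 1\<^sub>m (n+1) \<and> blk n i S1 = 1\<^sub>m (n+1) \<and> blk n i S2 = 1\<^sub>m (n+1))"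
  shows "\<exists>P R' S1' S2'. P \<in> carrier_mat (n+1) (n+1) \<and> invertible_mat P \<and>
     (fam1 R' S1' S2' \<or> fam2 R' S1' S2' \<or> fam3 R' S1' S2' \<or> fam4 R' S1' S2') \<and>
     (\<forall>i\<in>{1..n-1}. P * blk n i R = blk n i R' * P \<and>
                     P * blk n i S1 = blk n i S1' * P \<and>
                     P * blk n i S2 = blk n i S2' * P)"
proof -
  have "UV2_rep n (\<lambda>i. blk n i R) (\<lambda>i t. blk n i (if t = 1 then S1 else S2))"
    using assms(8) by (simp only: if_distrib)
  from UV2_rep_local_relations[OF assms(1) this, of 1] UV2_rep_local_relations[OF assms(1) this, of 2]
  have rho: "rho_relations R" and sigma: "sigma_relations R S1" "sigma_relations R S2"
    by auto
  have all: "\<forall>S\<in>{S1,S2}. sigma_relations R S \<and> S \<in> carrier_mat 3 3 \<and> invertible_mat S"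
    using sigma assms(3,4,6,7) by auto
  have "R \<noteq> 1\<^sub>m 3"
  proof
    assume "R = 1\<^sub>m 3"
    moreover have "S1 = 1\<^sub>m 3" "S2 = 1\<^sub>m 3"
      using sigma_identity_shape[OF sigma(1) assms(3) \<open>R = 1\<^sub>m 3\<close>]
        sigma_identity_shape[OF sigma(2) assms(4) \<open>R = 1\<^sub>m 3\<close>] by auto
    ultimately show False using assms(9) by (simp add: blk_one)
  qed
  with rho_relations_cases[OF assms(2) rho]
    fam1I[OF _ all] fam2I[OF _ all] fam3I[OF _ all] fam4I[OF _ all]
  have "fam1 R S1 S2 \<or> fam2 R S1 S2 \<or> fam3 R S1 S2 \<or> fam4 R S1 S2"
    by iprover
  moreover have "1\<^sub>m (n+1) * blk n i A = blk n i A * 1\<^sub>m (n+1)" for i A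
    using blk_carrier[of n i A] by simp
  ultimately show ?thesis
    using invertible_mat_one[of "n+1"]
    by (intro exI[of _ "1\<^sub>m (n+1)"] exI[of _ R] exI[of _ S1] exI[of _ S2]) simp
qed

end
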